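(* Let $H$ be a finite group, let $N$ be a subgroup of the center $Z(H)$, let $g \colon H \to H' = H/N$ be the canonical projection, and let $\psi \colon H \to \Gamma'$ be a homomorphism to an abelian group $\Gamma'$. Suppose $\ker g \cap \ker \psi = \{e\}$. Let $\mathcal{A}$ be an abelian subgroup of $H$ of the smallest possible index among abelian subgroups of $H$, and $\mathcal{A}'$ an abelian subgroup of $H'$ of the smallest possible index among abelian subgroups of $H'$. Then $[H : \mathcal{A}] = [H' : \mathcal{A}']$.
   Context: $e$ denotes the neutral element, $Z(H)$ the center of $H$, and $[A:B]$ the index of a subgroup $B$ in a group $A$. *)

theory Defs
  imports "HOL-Algebra.Algebra"
begin

definition center :: "('a, 'm) monoid_scheme \<Rightarrow> 'a set" where
  "center G = {z \<in> carrier G. \<forall>x \<in> carrier G. z \<otimes>\<^bsub>G\<^esub> x = x \<otimes>\<^bsub>G\<^esub> z}"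

definition abelian_subgroup :: "'a set \<Rightarrow> ('a, 'm) monoid_scheme \<Rightarrow> bool" where
  "abelian_subgroup A G \<longleftrightarrow> subgroup A G \<and> comm_group (G\<lparr>carrier := A\<rparr>)"

definition subgroup_index :: "('a, 'm) monoid_scheme \<Rightarrow> 'a set \<Rightarrow> nat" where
  "subgroup_index G A = card (rcosets\<^bsub>G\<^esub> A)"

definition min_index_abelian_subgroup :: "'a set \<Rightarrow> ('a, 'm) monoid_scheme \<Rightarrow> bool" where
  "min_index_abelian_subgroup A G \<longleftrightarrow> abelian_subgroup A G \<and>
     (\<forall>B. abelian_subgroup B G \<longrightarrow> subgroup_index G A \<le> subgroup_index G B)"

end

theory Submission imports Defs begin

text \<open>A commutator of two elements of the preimage of an abelian subgroup of \<open>H/N\<close> maps to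
  \<open>e\<close> both in \<open>H/N\<close> and in the abelian group \<open>\<Gamma>'\<close>, so it lies in \<open>ker g \<inter> ker \<psi> = {e}\<close>:
  preimages of abelian subgroups of \<open>H/N\<close> are abelian, and they have the same index.
  Conversely, the image of an abelian subgroup \<open>A\<close> of \<open>H\<close> is abelian, of index
  \<open>[H : AN] \<le> [H : A]\<close>. Comparing the minimal indices in both directions gives equality.
  Centrality of \<open>N\<close> is only needed to make \<open>N\<close> normal.\<close>

lemma (in group) center_subgroup_imp_normal:
  assumes "subgroup N G" and "N \<subseteq> center G"
  shows "N \<lhd> G"
proof (rule normalI[OF assms(1)], intro ballI)
  fix x assume "x \<in> carrier G"
  then have "\<And>n. n \<in> N \<Longrightarrow> n \<otimes> x = x \<otimes> n"
    using assms(2) unfolding center_def by blast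
  then show "N #> x = x <# N"
    unfolding r_coset_def l_coset_def by auto
qed

lemma (in normal) group_hom_r_coset: "group_hom G (G Mod H) (\<lambda>x. H #> x)"
  by (simp add: group_hom_def group_hom_axioms_def is_group factorgroup_is_group r_coset_hom_Mod)

lemma (in group) abelian_subgroup_iff:
  "abelian_subgroup A G \<longleftrightarrow> subgroup A G \<and> (\<forall>x\<in>A. \<forall>y\<in>A. x \<otimes> y = y \<otimes> x)"
proof (cases "subgroup A G")
  case True
  then interpret A: group "G\<lparr>carrier := A\<rparr>"
    by (rule subgroup.subgroup_is_group[OF _ is_group])
  show ?thesis
    unfolding abelian_subgroup_def
    using A.group_comm_groupI comm_groupE(4) by fastforce
qed (simp add: abelian_subgroup_def)

lemma (in group_hom) subgroup_vimage:
  assumes "subgroup B H"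
  shows "subgroup (h -` B \<inter> carrier G) G"
proof -
  interpret B: subgroup B H by fact
  show ?thesis
  proof (rule G.subgroupI)
    show "h -` B \<inter> carrier G \<noteq> {}"
      using B.one_closed by force
  qed (auto simp: B.m_closed)
qed

lemma (in group_hom) abelian_subgroup_image:
  assumes "abelian_subgroup A G"
  shows "abelian_subgroup (h ` A) H"
proof -
  have A: "subgroup A G" and comm: "\<forall>x\<in>A. \<forall>y\<in>A. x \<otimes> y = y \<otimes> x"
    using assms G.abelian_subgroup_iff by auto
  then have "\<forall>x\<in>A. \<forall>y\<in>A. h x \<otimes>\<^bsub>H\<^esub> h y = h y \<otimes>\<^bsub>H\<^esub> h x"
    by (metis hom_mult subgroup.mem_carrier)
  with subgroup_img_is_subgroup[OF A] show ?thesis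
    by (simp add: H.abelian_subgroup_iff)
qed

lemma (in group_hom) commutator_in_kernel:
  assumes "x \<in> carrier G" "y \<in> carrier G" and "h x \<otimes>\<^bsub>H\<^esub> h y = h y \<otimes>\<^bsub>H\<^esub> h x"
  shows "x \<otimes> y \<otimes> inv (y \<otimes> x) \<in> kernel G H h"
  using assms by (simp add: kernel_def)

lemma (in group_hom) abelian_subgroup_vimage:
  assumes "comm_group \<Gamma>" and "\<psi> \<in> hom G \<Gamma>"
    and ker: "kernel G H h \<inter> kernel G \<Gamma> \<psi> = {\<one>}"
    and "abelian_subgroup B H"
  shows "abelian_subgroup (h -` B \<inter> carrier G) G"
proof -
  interpret \<Gamma>: comm_group \<Gamma> by fact
  interpret \<psi>: group_hom G \<Gamma> \<psi>
    using assms(2) by (simp add: group_hom_def group_hom_axioms_def G.is_group \<Gamma>.is_group)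
  have B: "subgroup B H" and comm: "\<forall>u\<in>B. \<forall>v\<in>B. u \<otimes>\<^bsub>H\<^esub> v = v \<otimes>\<^bsub>H\<^esub> u"
    using assms(4) H.abelian_subgroup_iff by auto
  have "x \<otimes> y = y \<otimes> x" if x: "x \<in> carrier G" "h x \<in> B" and y: "y \<in> carrier G" "h y \<in> B" for x y
  proof -
    have "x \<otimes> y \<otimes> inv (y \<otimes> x) \<in> kernel G H h \<inter> kernel G \<Gamma> \<psi>"
      using commutator_in_kernel \<psi>.commutator_in_kernel \<Gamma>.m_comm comm x y by simp
    then have "x \<otimes> y \<otimes> inv (y \<otimes> x) = \<one>" using ker by blast
    then show ?thesis
      using x y by (metis G.inv_solve_right G.l_one G.m_closed G.one_closed)
  qed
  with subgroup_vimage[OF B] show ?thesis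
    by (auto simp: G.abelian_subgroup_iff)
qed

lemma (in group) subgroup_index_antimono:
  assumes "finite (carrier G)" "subgroup A G" "subgroup C G" "A \<subseteq> C"
  shows "subgroup_index G C \<le> subgroup_index G A"
proof -
  have "finite C" using assms(1,3) subgroup.subset finite_subset by blast
  then have "card A \<le> card C" using assms(4) by (rule card_mono)
  moreover have "card A > 0"
    using \<open>finite C\<close> assms(2,4) subgroup.one_closed by (metis card_gt_0_iff empty_iff finite_subset)
  moreover have "subgroup_index G A * card A = subgroup_index G C * card C"
    using lagrange[OF assms(2)] lagrange[OF assms(3)] unfolding subgroup_index_def by simp
  ultimately have "subgroup_index G C * card A \<le> subgroup_index G A * card A"
    by (metis mult_le_mono2)
  with \<open>card A > 0\<close> show ?thesis by simp
qed

lemma (in normal) card_vimage_r_coset: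
  assumes "subgroup B (G Mod H)"
  shows "card ((\<lambda>x. H #> x) -` B \<inter> carrier G) = card B * card H"
proof -
  interpret q: group_hom G "G Mod H" "\<lambda>x. H #> x" by (rule group_hom_r_coset)
  let ?B = "(\<lambda>x. H #> x) -` B \<inter> carrier G"
  have sB: "subgroup ?B G" by (rule q.subgroup_vimage[OF assms])
  have "H \<subseteq> ?B"
    using coset_join2 subgroup_axioms subgroup.one_closed[OF assms] subset by auto
  then have sH: "subgroup H (G\<lparr>carrier := ?B\<rparr>)"
    by (rule subgroup_incl[OF subgroup_axioms sB])
  have "rcosets\<^bsub>G\<lparr>carrier := ?B\<rparr>\<^esub> H = (\<lambda>x. H #> x) ` ?B"
    by (auto simp: RCOSETS_def r_coset_def)
  also have "\<dots> = B"
    using subgroup.subset[OF assms] by (auto simp: carrier_FactGroup)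
  finally show ?thesis
    using group.lagrange[OF subgroup.subgroup_is_group[OF sB is_group] sH]
    by (simp add: order_def)
qed

lemma (in normal) subgroup_index_vimage_r_coset:
  assumes "finite (carrier G)" "subgroup B (G Mod H)"
  shows "subgroup_index G ((\<lambda>x. H #> x) -` B \<inter> carrier G) = subgroup_index (G Mod H) B"
proof -
  interpret q: group_hom G "G Mod H" "\<lambda>x. H #> x" by (rule group_hom_r_coset)
  have "card H > 0"
    using assms(1) subset subgroup.one_closed[OF subgroup_axioms]
    by (metis card_gt_0_iff empty_iff finite_subset)
  moreover have "card B > 0"
    using assms subgroup.subset subgroup.one_closed
    by (metis card_gt_0_iff carrier_FactGroup empty_iff finite_imageI finite_subset)
  moreover
  have "subgroup_index G ((\<lambda>x. H #> x) -` B \<inter> carrier G) * (card B * card H) = order G"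
    using lagrange[OF q.subgroup_vimage[OF assms(2)]] card_vimage_r_coset[OF assms(2)]
    by (simp add: subgroup_index_def)
  moreover have "subgroup_index (G Mod H) B * (card B * card H) = order G"
    using q.H.lagrange[OF assms(2)] lagrange[OF subgroup_axioms]
    by (simp add: subgroup_index_def order_def FactGroup_def flip: mult.assoc)
  ultimately show ?thesis
    by (metis mult_right_cancel nat_0_less_mult_iff not_less0)
qed

lemma (in normal) subgroup_index_image_r_coset_le:
  assumes "finite (carrier G)" "subgroup A G"
  shows "subgroup_index (G Mod H) ((\<lambda>x. H #> x) ` A) \<le> subgroup_index G A"
proof -
  interpret q: group_hom G "G Mod H" "\<lambda>x. H #> x" by (rule group_hom_r_coset)
  have "subgroup ((\<lambda>x. H #> x) ` A) (G Mod H)"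
    by (rule q.subgroup_img_is_subgroup[OF assms(2)])
  moreover have "A \<subseteq> (\<lambda>x. H #> x) -` (\<lambda>x. H #> x) ` A \<inter> carrier G"
    using subgroup.subset[OF assms(2)] by auto
  ultimately show ?thesis
    using subgroup_index_antimono[OF assms(1,2) q.subgroup_vimage] subgroup_index_vimage_r_coset[OF assms(1)]
    by metis
qed

theorem mainTheorem4:
  fixes H :: "('a, 'm) monoid_scheme" and \<Gamma> :: "('c, 'n) monoid_scheme"
    and N :: "'a set" and \<psi> :: "'a \<Rightarrow> 'c"
    and A :: "'a set" and A' :: "'a set set"
  assumes "group H" and "finite (carrier H)"
    and "subgroup N H" and "N \<subseteq> center H"
    and "comm_group \<Gamma>" and "\<psi> \<in> hom H \<Gamma>"
    and "kernel H (H Mod N) (\<lambda>x. N #>\<^bsub>H\<^esub> x) \<inter> kernel H \<Gamma> \<psi> = {\<one>\<^bsub>H\<^esub>}"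
    and "min_index_abelian_subgroup A H"
    and "min_index_abelian_subgroup A' (H Mod N)"
  shows "subgroup_index H A = subgroup_index (H Mod N) A'"
proof -
  interpret normal N H
    using group.center_subgroup_imp_normal assms(1,3,4) by blast
  interpret q: group_hom H "H Mod N" "\<lambda>x. N #>\<^bsub>H\<^esub> x" by (rule group_hom_r_coset)
  have A: "abelian_subgroup A H" and A': "abelian_subgroup A' (H Mod N)"
    using assms(8,9) unfolding min_index_abelian_subgroup_def by auto
  have "subgroup_index H A \<le> subgroup_index H ((\<lambda>x. N #>\<^bsub>H\<^esub> x) -` A' \<inter> carrier H)"
    using assms(8) q.abelian_subgroup_vimage[OF assms(5-7) A']
    unfolding min_index_abelian_subgroup_def by blast
  also have "\<dots> = subgroup_index (H Mod N) A'"
    using subgroup_index_vimage_r_coset assms(2) A' abelian_subgroup_def by blast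
  finally have le: "subgroup_index H A \<le> subgroup_index (H Mod N) A'" .
  have "subgroup_index (H Mod N) A' \<le> subgroup_index (H Mod N) ((\<lambda>x. N #>\<^bsub>H\<^esub> x) ` A)"
    using assms(9) q.abelian_subgroup_image[OF A]
    unfolding min_index_abelian_subgroup_def by blast
  also have "\<dots> \<le> subgroup_index H A"
    using subgroup_index_image_r_coset_le assms(2) A abelian_subgroup_def by blast
  finally show ?thesis using le by simp
qed

end
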